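(* Let $A$ be a real symmetric $r$-matrix of order $n$. If $\eta^{(p)}(A)=n^{-r/p}|\Sigma A|$ for some $p>1$, then $A$ is regular.
   Context: A cubical $r$-matrix of order $n$ is a function $A$ on $[n]^r$ with entries $a_{i_1,\ldots,i_r}$; symmetric means invariant under permutations of indices. $\Sigma B$ denotes the sum of all entries of a matrix $B$. $P_A(\mathbf{x})=\sum a_{i_1,\ldots,i_r}x_{i_1}\cdots x_{i_r}$ and $\eta^{(p)}(A)=\max\{|P_A(\mathbf{x})|:\mathbf{x}\in\mathbb{R}^n,|\mathbf{x}|_p=1\}$. For $k\in[r]$, $s\in[n]$, the slice $A^{(k)}_s$ is the $(r-1)$-matrix obtained by fixing $i_k=s$. $A$ is regular if for every $k\in[r]$, $\Sigma A^{(k)}_1=\cdots=\Sigma A^{(k)}_n$. *)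

theory Defs
  imports Complex_Main "HOL-Combinatorics.Permutations"
begin

text \<open>A cubical r-matrix of order n is a real-valued function on index tuples
  i : {0..<r} -> {0..<n} (0-based indices), represented extensionally as elements of
  PiE {..<r} (\<lambda>_. {..<n}). Values of A outside this index set are irrelevant.\<close>

definition idx :: "nat \<Rightarrow> nat \<Rightarrow> (nat \<Rightarrow> nat) set" where
  "idx r n = PiE {..<r} (\<lambda>_. {..<n})"

definition msum :: "nat \<Rightarrow> nat \<Rightarrow> ((nat \<Rightarrow> nat) \<Rightarrow> real) \<Rightarrow> real" where
  "msum r n A = (\<Sum>i\<in>idx r n. A i)"

definition symmetric_matrix :: "nat \<Rightarrow> nat \<Rightarrow> ((nat \<Rightarrow> nat) \<Rightarrow> real) \<Rightarrow> bool" where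
  "symmetric_matrix r n A \<longleftrightarrow>
     (\<forall>i\<in>idx r n. \<forall>\<sigma>. \<sigma> permutes {..<r} \<longrightarrow> A (i \<circ> \<sigma>) = A i)"

definition polyA :: "nat \<Rightarrow> nat \<Rightarrow> ((nat \<Rightarrow> nat) \<Rightarrow> real) \<Rightarrow> (nat \<Rightarrow> real) \<Rightarrow> real" where
  "polyA r n A x = (\<Sum>i\<in>idx r n. A i * (\<Prod>k<r. x (i k)))"

definition pnorm :: "real \<Rightarrow> nat \<Rightarrow> (nat \<Rightarrow> real) \<Rightarrow> real" where
  "pnorm p n x = (\<Sum>j<n. \<bar>x j\<bar> powr p) powr (1 / p)"

text \<open>eta^(p)(A); the maximum exists by compactness, so it equals this supremum.\<close>
definition eta :: "real \<Rightarrow> nat \<Rightarrow> nat \<Rightarrow> ((nat \<Rightarrow> nat) \<Rightarrow> real) \<Rightarrow> real" where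
  "eta p r n A = Sup {\<bar>polyA r n A x\<bar> | x. pnorm p n x = 1}"

definition slice_sum :: "nat \<Rightarrow> nat \<Rightarrow> ((nat \<Rightarrow> nat) \<Rightarrow> real) \<Rightarrow> nat \<Rightarrow> nat \<Rightarrow> real" where
  "slice_sum r n A k s = (\<Sum>i\<in>{i\<in>idx r n. i k = s}. A i)"

definition regular_matrix :: "nat \<Rightarrow> nat \<Rightarrow> ((nat \<Rightarrow> nat) \<Rightarrow> real) \<Rightarrow> bool" where
  "regular_matrix r n A \<longleftrightarrow>
     (\<forall>k<r. \<forall>s<n. \<forall>t<n. slice_sum r n A k s = slice_sum r n A k t)"

end

theory Submission
  imports Defs
begin

text \<open>The hypothesis says that the all-ones vector \<open>\<one>\<close> attains \<open>\<eta>(A)\<close>, so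
  \<open>e \<mapsto> P_A(\<one> + e v) |\<one> + e v|\<^sub>p\<^sup>-\<^sup>r\<close> has a local extremum of its absolute value at
  \<open>e = 0\<close>. When \<open>\<Sum>v = 0\<close> the second factor has derivative \<open>0\<close> there, so the directional
  derivative of \<open>P_A\<close> at \<open>\<one>\<close>, which is \<open>\<Sum>\<^sub>k \<Sum>\<^sub>s v\<^sub>s \<Sigma>A\<^sup>(\<^sup>k\<^sup>)\<^sub>s\<close>, vanishes. Taking
  \<open>v = e\<^sub>s - e\<^sub>t\<close> and using that by symmetry \<open>\<Sigma>A\<^sup>(\<^sup>k\<^sup>)\<^sub>s\<close> does not depend on \<open>k\<close> gives
  regularity.\<close>

lemma finite_idx: "finite (idx r n)"
  by (simp add: idx_def finite_PiE)

lemma idx_comp_permutes: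
  assumes "i \<in> idx r n" and "\<sigma> permutes {..<r}"
  shows "i \<circ> \<sigma> \<in> idx r n"
  using assms permutes_in_image[OF assms(2)] permutes_not_in[OF assms(2)]
  unfolding idx_def by (auto simp: PiE_iff extensional_def)

lemma slice_sum_transpose:
  assumes "symmetric_matrix r n A" and "k < r" and "l < r"
  shows "slice_sum r n A k s = slice_sum r n A l s"
proof -
  let ?\<sigma> = "transpose k l"
  have perm: "?\<sigma> permutes {..<r}"
    using assms(2,3) by (intro permutes_swap_id) auto
  have involutive: "i \<circ> ?\<sigma> \<circ> ?\<sigma> = i" for i :: "nat \<Rightarrow> nat"
    by (auto simp: fun_eq_iff)
  show ?thesis
    unfolding slice_sum_def
  proof (rule sum.reindex_bij_witness[where i="\<lambda>i. i \<circ> ?\<sigma>" and j="\<lambda>i. i \<circ> ?\<sigma>"])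
    fix i assume "i \<in> {i \<in> idx r n. i l = s}"
    then show "i \<circ> ?\<sigma> \<circ> ?\<sigma> = i" "i \<circ> ?\<sigma> \<in> {i \<in> idx r n. i k = s}"
      using idx_comp_permutes[OF _ perm] involutive by auto
  next
    fix i assume i: "i \<in> {i \<in> idx r n. i k = s}"
    then show "i \<circ> ?\<sigma> \<circ> ?\<sigma> = i" "i \<circ> ?\<sigma> \<in> {i \<in> idx r n. i l = s}"
      using idx_comp_permutes[OF _ perm] involutive by auto
    show "A (i \<circ> ?\<sigma>) = A i"
      using assms(1) perm i unfolding symmetric_matrix_def by auto
  qed
qed

lemma pnorm_scale:
  assumes "c > 0" and "p > 0"
  shows "pnorm p n (\<lambda>j. c * x j) = c * pnorm p n x"
proof -
  have "(\<Sum>j<n. \<bar>c * x j\<bar> powr p) = c powr p * (\<Sum>j<n. \<bar>x j\<bar> powr p)"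
    using assms by (simp add: abs_mult powr_mult sum_distrib_left)
  then show ?thesis
    using assms unfolding pnorm_def by (simp add: powr_mult powr_powr)
qed

lemma polyA_scale: "polyA r n A (\<lambda>j. c * x j) = c ^ r * polyA r n A x"
  unfolding polyA_def by (simp add: prod.distrib sum_distrib_left mult_ac)

lemma abs_le_one_if_pnorm_eq_one:
  assumes "pnorm p n x = 1" and "p > 0" and "j < n"
  shows "\<bar>x j\<bar> \<le> 1"
proof (rule ccontr)
  assume "\<not> \<bar>x j\<bar> \<le> 1"
  then have "1 < \<bar>x j\<bar> powr p"
    using assms(2) by (simp add: gr_one_powr)
  also have "\<dots> \<le> (\<Sum>j<n. \<bar>x j\<bar> powr p)"
    using assms(3) by (intro member_le_sum) auto
  finally have "1 < (\<Sum>j<n. \<bar>x j\<bar> powr p) powr (1/p)"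
    using assms(2) by (simp add: gr_one_powr)
  then show False
    using assms(1) unfolding pnorm_def by simp
qed

lemma abs_polyA_le_sum_abs:
  assumes "pnorm p n x = 1" and "p > 0"
  shows "\<bar>polyA r n A x\<bar> \<le> (\<Sum>i\<in>idx r n. \<bar>A i\<bar>)"
proof -
  have "\<bar>polyA r n A x\<bar> \<le> (\<Sum>i\<in>idx r n. \<bar>A i * (\<Prod>k<r. x (i k))\<bar>)"
    unfolding polyA_def by (rule sum_abs)
  also have "\<dots> \<le> (\<Sum>i\<in>idx r n. \<bar>A i\<bar>)"
  proof (rule sum_mono)
    fix i assume i: "i \<in> idx r n"
    have "\<bar>\<Prod>k<r. x (i k)\<bar> \<le> 1"
      unfolding abs_prod
      using i abs_le_one_if_pnorm_eq_one[OF assms]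
      by (intro prod_le_1) (auto simp: idx_def PiE_iff)
    then show "\<bar>A i * (\<Prod>k<r. x (i k))\<bar> \<le> \<bar>A i\<bar>"
      by (simp add: abs_mult mult_left_le)
  qed
  finally show ?thesis .
qed

lemma abs_polyA_le_eta:
  assumes "p > 0" and "pnorm p n x > 0"
  shows "\<bar>polyA r n A x\<bar> \<le> eta p r n A * pnorm p n x ^ r"
proof -
  define N where "N = pnorm p n x"
  define u where "u = (\<lambda>j. (1/N) * x j)"
  have N: "N > 0"
    using assms N_def by simp
  have u_unit: "pnorm p n u = 1"
    using N assms pnorm_scale[of "1/N" p n x] by (simp add: u_def N_def)
  have "bdd_above {\<bar>polyA r n A x\<bar> | x. pnorm p n x = 1}"
    using abs_polyA_le_sum_abs[OF _ assms(1)] by (auto intro!: bdd_aboveI)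
  then have "\<bar>polyA r n A u\<bar> \<le> eta p r n A"
    unfolding eta_def using u_unit by (intro cSup_upper) auto
  moreover have "polyA r n A x = N ^ r * polyA r n A u"
    using N polyA_scale[of r n A N u] by (simp add: u_def)
  ultimately show ?thesis
    using N by (simp add: N_def abs_mult mult.commute mult_left_mono)
qed

lemma abs_polyA_mult_powr_le_eta:
  assumes "p > 0" and "n > 0" and "\<And>j. j < n \<Longrightarrow> x j > 0"
  shows "\<bar>polyA r n A x\<bar> * (\<Sum>j<n. x j powr p) powr (- real r / p) \<le> eta p r n A"
proof -
  define N where "N = (\<Sum>j<n. x j powr p)"
  have N_pos: "N > 0"
    unfolding N_def using assms(2,3) by (intro sum_pos) (auto dest: assms(3))
  have "pnorm p n x = N powr (1/p)"
    unfolding pnorm_def N_def using assms(3) by (simp add: abs_of_pos)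
  then have "\<bar>polyA r n A x\<bar> \<le> eta p r n A * N powr (real r / p)"
    using abs_polyA_le_eta[OF assms(1), of n x r A] N_pos by (simp add: powr_power)
  then have "\<bar>polyA r n A x\<bar> / N powr (real r / p) \<le> eta p r n A"
    using N_pos by (simp add: pos_divide_le_eq)
  then show ?thesis
    by (simp add: N_def powr_minus divide_inverse)
qed

lemma DERIV_local_max_abs:
  fixes f :: "real \<Rightarrow> real"
  assumes "(f has_real_derivative l) (at x)" and "d > 0"
    and "\<And>y. \<bar>x - y\<bar> < d \<Longrightarrow> \<bar>f y\<bar> \<le> \<bar>f x\<bar>"
  shows "l = 0"
proof (cases "f x \<ge> 0")
  case True
  then have "\<forall>y. \<bar>x - y\<bar> < d \<longrightarrow> f y \<le> f x"
    using assms(3) by force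
  then show ?thesis
    using DERIV_local_max[OF assms(1,2)] by blast
next
  case False
  then have "\<forall>y. \<bar>x - y\<bar> < d \<longrightarrow> f x \<le> f y"
    using assms(3) by force
  then show ?thesis
    using DERIV_local_min[OF assms(1,2)] by blast
qed

lemma polyA_along_ones_has_derivative:
  "((\<lambda>e. polyA r n A (\<lambda>j. 1 + e * v j)) has_real_derivative
      (\<Sum>i\<in>idx r n. A i * (\<Sum>k<r. v (i k)))) (at 0)"
  unfolding polyA_def
proof (rule DERIV_sum)
  fix i
  have "((\<lambda>e. \<Prod>k<r. 1 + e * v (i k)) has_real_derivative
          (\<Sum>k<r. v (i k) * (\<Prod>l\<in>{..<r}-{k}. 1 + 0 * v (i l)))) (at 0)"
    by (rule has_field_derivative_prod) (auto intro!: derivative_eq_intros)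
  then show "((\<lambda>e. A i * (\<Prod>k<r. 1 + e * v (i k))) has_real_derivative
               A i * (\<Sum>k<r. v (i k))) (at 0)"
    by (simp add: DERIV_cmult)
qed

lemma sum_powr_along_ones_has_derivative:
  "((\<lambda>e. \<Sum>j<n. (1 + e * v j) powr p) has_real_derivative p * (\<Sum>j<n. v j)) (at 0)"
proof -
  have "((\<lambda>e. \<Sum>j<n. (1 + e * v j) powr p) has_real_derivative
          (\<Sum>j<n. p * (1 + 0 * v j) powr (p - of_nat 1) * v j)) (at 0)"
    by (rule DERIV_sum, rule DERIV_fun_powr) (auto intro!: derivative_eq_intros)
  then show ?thesis
    by (simp add: sum_distrib_left)
qed

lemma one_plus_mult_pos_if_small:
  fixes v :: "nat \<Rightarrow> real"
  assumes "\<bar>e\<bar> < 1 / (1 + (\<Sum>j<n. \<bar>v j\<bar>))" and "j < n"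
  shows "1 + e * v j > 0"
proof -
  define S where "S = (\<Sum>j<n. \<bar>v j\<bar>)"
  have S_nonneg: "S \<ge> 0"
    unfolding S_def by (simp add: sum_nonneg)
  have "\<bar>e * v j\<bar> = \<bar>e\<bar> * \<bar>v j\<bar>"
    by (simp add: abs_mult)
  also have "\<dots> \<le> \<bar>e\<bar> * (1 + S)"
    unfolding S_def using assms(2) by (intro mult_left_mono member_le_sum add_increasing) auto
  also have "\<dots> < 1 / (1 + S) * (1 + S)"
    using assms(1) S_nonneg
    by (intro mult_strict_right_mono) (simp_all add: S_def add_pos_nonneg sum_nonneg)
  also have "\<dots> = 1"
    using S_nonneg by simp
  finally show ?thesis
    by linarith
qed

lemma eta_attained_at_ones_imp_critical:
  assumes "p > 0" and "n > 0"
    and eta: "eta p r n A = real n powr (- real r / p) * \<bar>msum r n A\<bar>"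
    and balanced: "(\<Sum>j<n. v j) = 0"
  shows "(\<Sum>i\<in>idx r n. A i * (\<Sum>k<r. v (i k))) = 0"
proof -
  define D where "D = (\<Sum>i\<in>idx r n. A i * (\<Sum>k<r. v (i k)))"
  define N where "N = (\<lambda>e. \<Sum>j<n. (1 + e * v j) powr p)"
  define c where "c = - real r / p"
  define h where "h = (\<lambda>e. polyA r n A (\<lambda>j. 1 + e * v j) * N e powr c)"
  define \<delta> where "\<delta> = 1 / (1 + (\<Sum>j<n. \<bar>v j\<bar>))"
  have N0: "N 0 = real n"
    unfolding N_def by simp
  have "(N has_real_derivative 0) (at 0)"
    using sum_powr_along_ones_has_derivative[where n=n and v=v and p=p] balanced by (simp add: N_def)
  then have "(h has_real_derivative D * N 0 powr c
      + c * N 0 powr (c - of_nat 1) * 0 * polyA r n A (\<lambda>j. 1 + 0 * v j)) (at 0)"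
    unfolding h_def D_def using assms(2) N0
    by (intro DERIV_mult polyA_along_ones_has_derivative DERIV_fun_powr) simp_all
  then have dh: "(h has_real_derivative D * N 0 powr c) (at 0)"
    by simp
  have h0: "\<bar>h 0\<bar> = eta p r n A"
    using eta unfolding h_def N0 c_def polyA_def msum_def by (simp add: abs_mult mult.commute)
  have "\<delta> > 0"
    unfolding \<delta>_def by (simp add: add_pos_nonneg sum_nonneg)
  moreover have "\<bar>h e\<bar> \<le> \<bar>h 0\<bar>" if e: "\<bar>0 - e\<bar> < \<delta>" for e
  proof -
    define y where "y = (\<lambda>j. 1 + e * v j)"
    have y_pos: "y j > 0" if "j < n" for j
      using one_plus_mult_pos_if_small[where e=e and n=n and v=v and j=j] e that by (simp add: y_def \<delta>_def)
    have "\<bar>polyA r n A y\<bar> * N e powr c \<le> eta p r n A"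
      using abs_polyA_mult_powr_le_eta[OF assms(1,2) y_pos] by (simp only: N_def c_def y_def)
    then show ?thesis
      using h0 by (simp add: h_def y_def abs_mult)
  qed
  ultimately have "D * N 0 powr c = 0"
    by (rule DERIV_local_max_abs[OF dh])
  then show ?thesis
    using N0 assms(2) by (simp add: D_def)
qed

lemma sum_idx_eq_sum_slices:
  "(\<Sum>i\<in>idx r n. A i * (\<Sum>k<r. v (i k))) = (\<Sum>k<r. \<Sum>s<n. v s * slice_sum r n A k s)"
proof -
  have slice_k: "(\<Sum>i\<in>idx r n. A i * v (i k)) = (\<Sum>s<n. v s * slice_sum r n A k s)"
    if "k < r" for k
  proof -
    have "(\<lambda>i. i k) ` idx r n \<subseteq> {..<n}"
      using that by (auto simp: idx_def PiE_iff)
    then have "(\<Sum>i\<in>idx r n. A i * v (i k))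
        = (\<Sum>s<n. \<Sum>i\<in>{i \<in> idx r n. i k = s}. A i * v (i k))"
      by (rule sum.group[OF finite_idx finite_lessThan, symmetric])
    also have "\<dots> = (\<Sum>s<n. \<Sum>i\<in>{i \<in> idx r n. i k = s}. A i * v s)"
      by (intro sum.cong) auto
    also have "\<dots> = (\<Sum>s<n. v s * slice_sum r n A k s)"
      unfolding slice_sum_def by (simp add: sum_distrib_left mult.commute)
    finally show ?thesis .
  qed
  have "(\<Sum>i\<in>idx r n. A i * (\<Sum>k<r. v (i k))) = (\<Sum>k<r. \<Sum>i\<in>idx r n. A i * v (i k))"
    unfolding sum_distrib_left by (rule sum.swap)
  also have "\<dots> = (\<Sum>k<r. \<Sum>s<n. v s * slice_sum r n A k s)"
    using slice_k by (intro sum.cong) auto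
  finally show ?thesis .
qed

lemma sum_unit_vector_diff_mult:
  fixes f :: "nat \<Rightarrow> real"
  assumes "s < n" and "t < n"
  shows "(\<Sum>j<n. ((if j = s then 1 else 0) - (if j = t then 1 else 0)) * f j) = f s - f t"
proof -
  have "(\<Sum>j<n. ((if j = s then 1 else 0) - (if j = t then 1 else 0)) * f j)
      = (\<Sum>j<n. if j = s then f j else 0) - (\<Sum>j<n. if j = t then f j else 0)"
    unfolding left_diff_distrib sum_subtractf
    by (rule arg_cong2[where f=minus]; rule sum.cong) auto
  then show ?thesis
    using assms by simp
qed

lemma slice_sums_eq_if_eta_attained_at_ones:
  assumes "p > 0"
    and eta: "eta p r n A = real n powr (- real r / p) * \<bar>msum r n A\<bar>"
    and "s < n" and "t < n"
  shows "(\<Sum>k<r. slice_sum r n A k s) = (\<Sum>k<r. slice_sum r n A k t)"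
proof -
  define v where "v = (\<lambda>j::nat. (if j = s then 1 else 0) - (if j = t then 1 else 0) :: real)"
  have "(\<Sum>j<n. v j) = 0"
    using sum_unit_vector_diff_mult[OF assms(3,4), of "\<lambda>_. 1"] by (simp add: v_def)
  then have "(\<Sum>k<r. \<Sum>j<n. v j * slice_sum r n A k j) = 0"
    using eta_attained_at_ones_imp_critical[OF assms(1) _ eta] assms(3)
    by (simp add: sum_idx_eq_sum_slices)
  then have "(\<Sum>k<r. slice_sum r n A k s - slice_sum r n A k t) = 0"
    using sum_unit_vector_diff_mult[OF assms(3,4)] by (simp add: v_def)
  then show ?thesis
    by (simp add: sum_subtractf)
qed

theorem proposition18:
  fixes r n :: nat and A :: "(nat \<Rightarrow> nat) \<Rightarrow> real" and p :: real
  assumes "symmetric_matrix r n A"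
    and "p > 1"
    and "eta p r n A = real n powr (- real r / p) * \<bar>msum r n A\<bar>"
  shows "regular_matrix r n A"
  unfolding regular_matrix_def
proof (intro allI impI)
  fix k s t assume "k < r" "s < n" "t < n"
  have slices_of_k: "(\<Sum>l<r. slice_sum r n A l u) = real r * slice_sum r n A k u" for u
    using slice_sum_transpose[OF assms(1) _ \<open>k < r\<close>] by simp
  have "(\<Sum>l<r. slice_sum r n A l s) = (\<Sum>l<r. slice_sum r n A l t)"
    using assms(2,3) \<open>s < n\<close> \<open>t < n\<close> by (intro slice_sums_eq_if_eta_attained_at_ones) auto
  then show "slice_sum r n A k s = slice_sum r n A k t"
    using \<open>k < r\<close> by (simp add: slices_of_k)
qed

end
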